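(* Let $n$ be a positive integer. The set $$\Big\{\tbinom{n}{k}\big(a^{\otimes k}\otimes(a^c)^{\otimes(n-k)}\big)^\vee\ :\ k=0,\ldots,n\Big\}$$ is a complete set of primitive orthogonal idempotents in $\mathrm{Sym}^n\mathbb{C}[e_1]$.
   Context: $\mathbb{C}[e_1]=\mathbb{R}[e_1]\otimes_\mathbb{R}\mathbb{C}$ is the commutative $\mathbb{C}$-algebra with basis $1,e_1$ and $e_1^2=-1$. $\mathbb{C}[e_1]^{\otimes n}$ is the $n$-fold tensor power over $\mathbb{C}$ with componentwise multiplication; $\mathfrak S_n$ acts by $\sigma(x_1\otimes\cdots\otimes x_n)=x_{\sigma^{-1}(1)}\otimes\cdots\otimes x_{\sigma^{-1}(n)}$; $x^\vee=\frac1{n!}\sum_{\sigma\in\mathfrak S_n}\sigma(x)$; $\mathrm{Sym}^n\mathbb{C}[e_1]$ is the subalgebra of fixed tensors. $a=\frac12(1+\sqrt{-1}e_1)$, $a^c=\frac12(1-\sqrt{-1}e_1)$. In a unital associative ring: idempotent $x^2=x$; orthogonal means pairwise products zero; a nonzero idempotent is primitive if not a sum of two nonzero orthogonal idempotents; a set of orthogonal idempotents is complete if it sums to $1$. *)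

theory Defs
  imports Complex_Main "HOL-Combinatorics.Permutations"
begin

text \<open>
An element x + y e1 of C[e1] is represented by the pair (x, y) of complex numbers.
The n-fold tensor power C[e1]^{(x) n} has the C-basis e_S, S a subset of {0..<n},
where e_S is the pure tensor with e1 in the positions of S and 1 elsewhere.
A tensor is represented by its coefficient function on subsets of {0..<n}
(coefficients outside Pow {0..<n} are zero).
\<close>

type_synonym ce1 = "complex \<times> complex"
type_synonym tensor = "nat set \<Rightarrow> complex"

definition tensors :: "nat \<Rightarrow> tensor set" where
  "tensors n = {x. \<forall>S. \<not> S \<subseteq> {..<n} \<longrightarrow> x S = 0}"

definition tzero :: tensor where
  "tzero = (\<lambda>S. 0)"

definition tadd :: "tensor \<Rightarrow> tensor \<Rightarrow> tensor" where
  "tadd x y = (\<lambda>S. x S + y S)"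

definition tscale :: "complex \<Rightarrow> tensor \<Rightarrow> tensor" where
  "tscale c x = (\<lambda>S. c * x S)"

definition tsum :: "'i set \<Rightarrow> ('i \<Rightarrow> tensor) \<Rightarrow> tensor" where
  "tsum I f = (\<lambda>S. \<Sum>k\<in>I. f k S)"

definition tone :: "nat \<Rightarrow> tensor" where
  "tone n = (\<lambda>S. if S = {} then 1 else 0)"

text \<open>Componentwise multiplication: on basis tensors, since e1^2 = -1 and C[e1] is
commutative, e_A * e_B = (-1)^|A \<inter> B| e_(A \<triangle> B); extended bilinearly.\<close>
definition tmul :: "nat \<Rightarrow> tensor \<Rightarrow> tensor \<Rightarrow> tensor" where
  "tmul n x y = (\<lambda>S. \<Sum>A\<in>Pow {..<n}. \<Sum>B\<in>Pow {..<n}.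
      if (A - B) \<union> (B - A) = S then (-1) ^ card (A \<inter> B) * x A * y B else 0)"

definition ptensor :: "nat \<Rightarrow> (nat \<Rightarrow> ce1) \<Rightarrow> tensor" where
  "ptensor n f = (\<lambda>S. if S \<subseteq> {..<n}
      then (\<Prod>i<n. if i \<in> S then snd (f i) else fst (f i)) else 0)"

text \<open>Action of a permutation sigma of {0..<n}:
sigma(x_1 (x) ... (x) x_n) = x_{sigma^-1 1} (x) ... (x) x_{sigma^-1 n}, i.e. e_S maps to e_(sigma S).\<close>
definition tperm :: "(nat \<Rightarrow> nat) \<Rightarrow> tensor \<Rightarrow> tensor" where
  "tperm \<sigma> x = (\<lambda>T. x (inv \<sigma> ` T))"

definition symz :: "nat \<Rightarrow> tensor \<Rightarrow> tensor" where
  "symz n x = (\<lambda>S. (1 / of_nat (fact n)) * (\<Sum>\<sigma>\<in>{\<sigma>. \<sigma> permutes {..<n}}. tperm \<sigma> x S))"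

definition Sym :: "nat \<Rightarrow> tensor set" where
  "Sym n = {x \<in> tensors n. \<forall>\<sigma>. \<sigma> permutes {..<n} \<longrightarrow> tperm \<sigma> x = x}"

definition idempotent :: "nat \<Rightarrow> tensor \<Rightarrow> bool" where
  "idempotent n x \<longleftrightarrow> tmul n x x = x"

definition orthogonal :: "nat \<Rightarrow> tensor \<Rightarrow> tensor \<Rightarrow> bool" where
  "orthogonal n x y \<longleftrightarrow> tmul n x y = tzero \<and> tmul n y x = tzero"

definition primitive_in_Sym :: "nat \<Rightarrow> tensor \<Rightarrow> bool" where
  "primitive_in_Sym n e \<longleftrightarrow> e \<in> Sym n \<and> e \<noteq> tzero \<and> idempotent n e \<and>
     \<not> (\<exists>f \<in> Sym n. \<exists>g \<in> Sym n. f \<noteq> tzero \<and> g \<noteq> tzero \<and> idempotent n f \<and>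
          idempotent n g \<and> orthogonal n f g \<and> tadd f g = e)"

definition a_el :: ce1 where "a_el = (1/2, \<i>/2)"
definition ac_el :: ce1 where "ac_el = (1/2, - \<i>/2)"

definition idem :: "nat \<Rightarrow> nat \<Rightarrow> tensor" where
  "idem n k = tscale (of_nat (n choose k))
     (symz n (ptensor n (\<lambda>i. if i < k then a_el else ac_el)))"

end

theory Submission
  imports Defs
begin

text \<open>
  Since e1 has eigenvalues \<plusminus>\<i>, the algebra C[e1]^{(x) n} is split by its 2^n characters
  eval_tensor n T, which send e1 in slot i to -\<i> for i \<in> T and to \<i> otherwise; distinct
  characters are orthogonal, so a tensor is determined by its values on them.
  The element a is 1 at -\<i> and 0 at \<i>, and a^c the other way round, so the pure tensor
  a^{(x) k} (x) (a^c)^{(x) (n-k)} is the indicator of the single character T = {0..<k}.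
  Symmetrising averages over the permutation orbit, and counting the permutations that move
  T onto {0..<k} shows that binom(n,k) times the average is the indicator of card T = k.
  A symmetric tensor has values depending only on card T, so these n+1 indicators are the
  primitive idempotents of Sym^n C[e1], and they sum to 1.
\<close>

definition e1_value :: "nat set \<Rightarrow> nat \<Rightarrow> complex" where
  "e1_value T i = (if i \<in> T then - \<i> else \<i>)"

definition basis_value :: "nat set \<Rightarrow> nat set \<Rightarrow> complex" where
  "basis_value T A = (\<Prod>i\<in>A. e1_value T i)"

definition eval_tensor :: "nat \<Rightarrow> nat set \<Rightarrow> tensor \<Rightarrow> complex" where
  "eval_tensor n T x = (\<Sum>A\<in>Pow {..<n}. x A * basis_value T A)"

lemma sum_Pow_prod_mem:
  fixes F :: "'a \<Rightarrow> bool \<Rightarrow> 'b::comm_semiring_1"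
  assumes "finite A"
  shows "(\<Sum>T\<in>Pow A. \<Prod>i\<in>A. F i (i \<in> T)) = (\<Prod>i\<in>A. F i True + F i False)"
proof -
  have "(\<Prod>i\<in>A. F i (i \<in> T)) = (\<Prod>i\<in>T. F i True) * (\<Prod>i\<in>A - T. F i False)"
    if "T \<in> Pow A" for T
  proof -
    have "(\<Prod>i\<in>A. F i (i \<in> T)) = (\<Prod>i\<in>A - T. F i (i \<in> T)) * (\<Prod>i\<in>T. F i (i \<in> T))"
      using that assms by (intro prod.subset_diff) auto
    also have "\<dots> = (\<Prod>i\<in>T. F i True) * (\<Prod>i\<in>A - T. F i False)"
      by (simp add: mult.commute)
    finally show ?thesis .
  qed
  then show ?thesis by (simp add: prod_add[OF assms])
qed

lemma e1_value_squared: "e1_value T i * e1_value T i = -1"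
  by (simp add: e1_value_def)

lemma basis_value_eq_prod_lessThan:
  assumes "A \<subseteq> {..<n}"
  shows "basis_value T A = (\<Prod>i<n. if i \<in> A then e1_value T i else 1)"
  unfolding basis_value_def using assms by (simp add: prod.If_cases Int_absorb1)

lemma basis_value_symdiff:
  assumes "finite A" "finite B"
  shows "(-1) ^ card (A \<inter> B) * basis_value T ((A - B) \<union> (B - A))
       = basis_value T A * basis_value T B"
proof -
  let ?v = "basis_value T"
  have split: "?v C = ?v (C - D) * ?v (C \<inter> D)" if "finite C" for C D
  proof -
    have "C - C \<inter> D = C - D" by blast
    with that show ?thesis using prod.subset_diff[of "C \<inter> D" C "e1_value T"]
      by (simp add: basis_value_def)
  qed
  have "?v A = ?v (A - B) * ?v (A \<inter> B)"
    using split[OF assms(1)] .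
  moreover have "?v B = ?v (B - A) * ?v (A \<inter> B)"
    using split[OF assms(2), of A] by (simp add: Int_commute)
  moreover have "?v ((A - B) \<union> (B - A)) = ?v (A - B) * ?v (B - A)"
    unfolding basis_value_def using assms by (subst prod.union_disjoint) auto
  moreover have "?v (A \<inter> B) * ?v (A \<inter> B) = (-1) ^ card (A \<inter> B)"
    unfolding basis_value_def prod.distrib[symmetric] e1_value_squared by simp
  ultimately show ?thesis by (simp add: algebra_simps)
qed

lemma eval_tensor_tmul: "eval_tensor n T (tmul n x y) = eval_tensor n T x * eval_tensor n T y"
proof -
  let ?P = "Pow {..<n}"
  let ?c = "\<lambda>A B. (-1) ^ card (A \<inter> B) * x A * y B"
  have "eval_tensor n T (tmul n x y) = (\<Sum>S\<in>?P. \<Sum>A\<in>?P. \<Sum>B\<in>?P.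
      (if (A - B) \<union> (B - A) = S then ?c A B * basis_value T S else 0))"
    unfolding eval_tensor_def tmul_def sum_distrib_right by (intro sum.cong refl) auto
  also have "\<dots> = (\<Sum>A\<in>?P. \<Sum>B\<in>?P. \<Sum>S\<in>?P.
      (if (A - B) \<union> (B - A) = S then ?c A B * basis_value T S else 0))"
    by (subst sum.swap) (subst (2) sum.swap, rule refl)
  also have "\<dots> = (\<Sum>A\<in>?P. \<Sum>B\<in>?P. ?c A B * basis_value T ((A - B) \<union> (B - A)))"
    by (intro sum.cong refl) (auto simp: sum.delta)
  also have "\<dots> = (\<Sum>A\<in>?P. \<Sum>B\<in>?P. (x A * basis_value T A) * (y B * basis_value T B))"
  proof (intro sum.cong refl)
    fix A B assume "A \<in> ?P" "B \<in> ?P"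
    then have "finite A" "finite B" by (auto intro: finite_subset)
    from basis_value_symdiff[OF this, of T]
    show "?c A B * basis_value T ((A - B) \<union> (B - A)) = (x A * basis_value T A) * (y B * basis_value T B)"
      by (simp add: algebra_simps)
  qed
  also have "\<dots> = eval_tensor n T x * eval_tensor n T y"
    unfolding eval_tensor_def sum_product by simp
  finally show ?thesis .
qed

lemma basis_value_orthogonal:
  assumes "A \<subseteq> {..<n}" "B \<subseteq> {..<n}"
  shows "(\<Sum>T\<in>Pow {..<n}. basis_value T A * cnj (basis_value T B)) = (if A = B then 2 ^ n else 0)"
proof -
  define v :: "bool \<Rightarrow> complex" where "v t = (if t then - \<i> else \<i>)" for t
  define F where "F i t = (if i \<in> A then v t else 1) * cnj (if i \<in> B then v t else 1)" for i t
  have "basis_value T A * cnj (basis_value T B) = (\<Prod>i<n. F i (i \<in> T))" for T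
  proof -
    have e1: "e1_value T = (\<lambda>i. v (i \<in> T))" by (simp add: fun_eq_iff e1_value_def v_def)
    show ?thesis
      unfolding basis_value_eq_prod_lessThan[OF assms(1)] basis_value_eq_prod_lessThan[OF assms(2)] e1
      by (simp add: F_def prod.distrib)
  qed
  then have "(\<Sum>T\<in>Pow {..<n}. basis_value T A * cnj (basis_value T B)) = (\<Prod>i<n. F i True + F i False)"
    by (simp add: sum_Pow_prod_mem)
  also have "\<dots> = (\<Prod>i<n. if (i \<in> A) = (i \<in> B) then 2 else 0)"
    by (intro prod.cong refl) (auto simp: F_def v_def)
  also have "\<dots> = (if A = B then 2 ^ n else 0)"
  proof (cases "A = B")
    case False
    then obtain i where "(i \<in> A) \<noteq> (i \<in> B)" by blast
    moreover from this have "i < n" using assms by auto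
    ultimately have "(\<Prod>i<n. if (i \<in> A) = (i \<in> B) then 2 else 0 :: complex) = 0"
      by (intro prod_zero) auto
    with False show ?thesis by simp
  qed simp
  finally show ?thesis .
qed

lemma eval_tensor_inversion:
  assumes "x \<in> tensors n" "B \<subseteq> {..<n}"
  shows "(\<Sum>T\<in>Pow {..<n}. eval_tensor n T x * cnj (basis_value T B)) = 2 ^ n * x B"
proof -
  have "(\<Sum>T\<in>Pow {..<n}. eval_tensor n T x * cnj (basis_value T B))
      = (\<Sum>A\<in>Pow {..<n}. x A * (\<Sum>T\<in>Pow {..<n}. basis_value T A * cnj (basis_value T B)))"
    unfolding eval_tensor_def sum_distrib_right sum_distrib_left
    by (subst sum.swap) (simp add: algebra_simps)
  also have "\<dots> = (\<Sum>A\<in>Pow {..<n}. if A = B then x A * 2 ^ n else 0)"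
    using assms by (intro sum.cong refl) (auto simp: basis_value_orthogonal)
  also have "\<dots> = 2 ^ n * x B"
    using assms by (simp add: sum.delta')
  finally show ?thesis .
qed

lemma tensor_eqI:
  assumes "x \<in> tensors n" "y \<in> tensors n"
    and "\<And>T. T \<subseteq> {..<n} \<Longrightarrow> eval_tensor n T x = eval_tensor n T y"
  shows "x = y"
proof
  fix B
  show "x B = y B"
  proof (cases "B \<subseteq> {..<n}")
    case True
    have "(2::complex) ^ n * x B = 2 ^ n * y B"
      using eval_tensor_inversion[OF assms(1) True] eval_tensor_inversion[OF assms(2) True] assms(3)
      by simp
    then show ?thesis by simp
  next
    case False
    with assms show ?thesis by (simp add: tensors_def)
  qed
qed

lemma eval_tensor_tzero: "eval_tensor n T tzero = 0"
  unfolding eval_tensor_def tzero_def by simp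

lemma eval_tensor_tadd: "eval_tensor n T (tadd x y) = eval_tensor n T x + eval_tensor n T y"
  unfolding eval_tensor_def tadd_def by (simp add: sum.distrib algebra_simps)

lemma eval_tensor_tscale: "eval_tensor n T (tscale c x) = c * eval_tensor n T x"
  unfolding eval_tensor_def tscale_def by (simp add: sum_distrib_left algebra_simps)

lemma eval_tensor_tsum: "eval_tensor n T (tsum I f) = (\<Sum>k\<in>I. eval_tensor n T (f k))"
  unfolding eval_tensor_def tsum_def sum_distrib_right by (rule sum.swap)

lemma eval_tensor_tone: "eval_tensor n T (tone n) = 1"
proof -
  have "eval_tensor n T (tone n) = (\<Sum>A\<in>Pow {..<n}. if A = {} then 1 else 0)"
    unfolding eval_tensor_def tone_def by (intro sum.cong refl) (simp add: basis_value_def)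
  then show ?thesis by (simp add: sum.delta')
qed

lemma eval_tensor_symz:
  "eval_tensor n T (symz n x)
     = (\<Sum>\<sigma>\<in>{\<sigma>. \<sigma> permutes {..<n}}. eval_tensor n T (tperm \<sigma> x)) / fact n"
  unfolding eval_tensor_def symz_def sum_distrib_left sum_distrib_right sum_divide_distrib
  by (subst sum.swap) simp

lemma eval_tensor_tperm:
  assumes "\<sigma> permutes {..<n}"
  shows "eval_tensor n T (tperm \<sigma> x) = eval_tensor n (inv \<sigma> ` T) x"
proof -
  have "eval_tensor n T (tperm \<sigma> x) = (\<Sum>A\<in>Pow {..<n}. x (inv \<sigma> ` A) * basis_value T A)"
    unfolding eval_tensor_def tperm_def ..
  also have "\<dots> = (\<Sum>B\<in>Pow {..<n}. x (inv \<sigma> ` \<sigma> ` B) * basis_value T (\<sigma> ` B))"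
    using bij_betw_image_Pow[OF permutes_imp_bij[OF assms]] by (rule sum.reindex_bij_betw[symmetric])
  also have "\<dots> = (\<Sum>B\<in>Pow {..<n}. x B * basis_value (inv \<sigma> ` T) B)"
  proof (intro sum.cong refl)
    fix B
    have "basis_value T (\<sigma> ` B) = (\<Prod>j\<in>B. e1_value T (\<sigma> j))"
      unfolding basis_value_def using permutes_inj[OF assms]
      by (simp add: prod.reindex inj_on_subset)
    also have "\<dots> = basis_value (inv \<sigma> ` T) B"
      unfolding basis_value_def e1_value_def
      by (simp add: bij_vimage_eq_inv_image[OF permutes_bij[OF assms], symmetric])
    finally show "x (inv \<sigma> ` \<sigma> ` B) * basis_value T (\<sigma> ` B) = x B * basis_value (inv \<sigma> ` T) B"
      by (simp add: image_image permutes_inverses[OF assms])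
  qed
  finally show ?thesis unfolding eval_tensor_def .
qed

lemma eval_tensor_ptensor:
  assumes "T \<subseteq> {..<n}"
  shows "eval_tensor n T (ptensor n f) = (\<Prod>i<n. fst (f i) + snd (f i) * e1_value T i)"
proof -
  define G where "G i t = (if t then snd (f i) * e1_value T i else fst (f i))" for i t
  have "ptensor n f A * basis_value T A = (\<Prod>i<n. G i (i \<in> A))" if "A \<in> Pow {..<n}" for A
  proof -
    have "basis_value T A = (\<Prod>i<n. if i \<in> A then e1_value T i else 1)"
      using that by (simp add: basis_value_eq_prod_lessThan)
    with that show ?thesis
      unfolding ptensor_def G_def by (auto simp: prod.distrib[symmetric] intro!: prod.cong)
  qed
  then have "eval_tensor n T (ptensor n f) = (\<Sum>A\<in>Pow {..<n}. \<Prod>i<n. G i (i \<in> A))"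
    unfolding eval_tensor_def by simp
  also have "\<dots> = (\<Prod>i<n. G i True + G i False)"
    by (simp add: sum_Pow_prod_mem)
  finally show ?thesis by (simp add: G_def add.commute)
qed

lemma tperm_in_tensors:
  assumes "\<sigma> permutes {..<n}" "x \<in> tensors n"
  shows "tperm \<sigma> x \<in> tensors n"
  unfolding tensors_def tperm_def
proof (intro CollectI allI impI)
  fix S assume "\<not> S \<subseteq> {..<n}"
  moreover have "S = \<sigma> ` inv \<sigma> ` S"
    by (simp add: image_image permutes_inverses[OF assms(1)])
  ultimately have "\<not> inv \<sigma> ` S \<subseteq> {..<n}"
    using permutes_image[OF assms(1)] by (metis image_mono)
  with assms(2) show "x (inv \<sigma> ` S) = 0" by (simp add: tensors_def)
qed

lemma symz_in_tensors: "x \<in> tensors n \<Longrightarrow> symz n x \<in> tensors n"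
  using tperm_in_tensors unfolding tensors_def symz_def by simp

lemma tscale_in_tensors: "x \<in> tensors n \<Longrightarrow> tscale c x \<in> tensors n"
  unfolding tensors_def tscale_def by simp

lemma ptensor_in_tensors: "ptensor n f \<in> tensors n"
  unfolding tensors_def ptensor_def by simp

lemma tmul_in_tensors: "tmul n x y \<in> tensors n"
  unfolding tensors_def tmul_def by (intro CollectI allI impI sum.neutral ballI) auto

lemma tsum_in_tensors: "(\<And>k. k \<in> I \<Longrightarrow> f k \<in> tensors n) \<Longrightarrow> tsum I f \<in> tensors n"
  unfolding tensors_def tsum_def by simp

lemma tone_in_tensors: "tone n \<in> tensors n"
  unfolding tensors_def tone_def by simp

lemma tzero_in_tensors: "tzero \<in> tensors n"
  unfolding tensors_def tzero_def by simp

lemma idem_in_tensors: "idem n k \<in> tensors n"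
  unfolding idem_def by (intro tscale_in_tensors symz_in_tensors ptensor_in_tensors)

lemma exists_permutes_image_eq:
  assumes "finite S" "T \<subseteq> S" "T' \<subseteq> S" "card T = card T'"
  obtains \<tau> where "\<tau> permutes S" "\<tau> ` T = T'"
proof -
  have "finite T" "finite T'" using assms finite_subset by auto
  then obtain f where f: "bij_betw f T T'"
    using assms(4) finite_same_card_bij by blast
  have "card (S - T) = card (S - T')"
    using assms \<open>finite T\<close> \<open>finite T'\<close> by (simp add: card_Diff_subset)
  then obtain g where g: "bij_betw g (S - T) (S - T')"
    using assms(1) finite_same_card_bij by (meson finite_Diff)
  define \<tau> where "\<tau> x = (if x \<in> T then f x else if x \<in> S then g x else x)" for x
  have "bij_betw \<tau> T T'"
    using f by (rule bij_betw_cong[THEN iffD1, rotated]) (simp add: \<tau>_def)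
  moreover have "bij_betw \<tau> (S - T) (S - T')"
    using g by (rule bij_betw_cong[THEN iffD1, rotated]) (simp add: \<tau>_def)
  ultimately have "bij_betw \<tau> (T \<union> (S - T)) (T' \<union> (S - T'))"
    by (rule bij_betw_combine) auto
  moreover have "T \<union> (S - T) = S" "T' \<union> (S - T') = S" using assms by auto
  ultimately have "\<tau> permutes S"
    by (intro bij_imp_permutes) (auto simp: \<tau>_def dest: subsetD[OF assms(2)])
  moreover have "\<tau> ` T = T'"
    using \<open>bij_betw \<tau> T T'\<close> by (simp add: bij_betw_def)
  ultimately show ?thesis by (rule that)
qed

lemma card_permutes_image_eq_cong:
  assumes "finite S" "T \<subseteq> S" "T' \<subseteq> S" "card T = card T'"
  shows "card {\<sigma>. \<sigma> permutes S \<and> \<sigma> ` T = K} = card {\<sigma>. \<sigma> permutes S \<and> \<sigma> ` T' = K}"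
proof -
  obtain \<tau> where \<tau>: "\<tau> permutes S" "\<tau> ` T' = T"
    using exists_permutes_image_eq[OF assms(1,3,2) assms(4)[symmetric]] by blast
  have inv_\<tau>: "inv \<tau> ` T = T'"
    using \<tau> by (metis image_inv_f_f permutes_inj)
  have "bij_betw (\<lambda>\<sigma>. \<sigma> \<circ> \<tau>) {\<sigma>. \<sigma> permutes S \<and> \<sigma> ` T = K} {\<sigma>. \<sigma> permutes S \<and> \<sigma> ` T' = K}"
  proof (rule bij_betw_byWitness[where f' = "\<lambda>\<sigma>. \<sigma> \<circ> inv \<tau>"])
    show "\<forall>\<sigma>\<in>{\<sigma>. \<sigma> permutes S \<and> \<sigma> ` T = K}. \<sigma> \<circ> \<tau> \<circ> inv \<tau> = \<sigma>"
      using permutes_inv_o(1)[OF \<tau>(1)] by (simp add: o_assoc[symmetric])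
    show "\<forall>\<sigma>\<in>{\<sigma>. \<sigma> permutes S \<and> \<sigma> ` T' = K}. \<sigma> \<circ> inv \<tau> \<circ> \<tau> = \<sigma>"
      using permutes_inv_o(2)[OF \<tau>(1)] by (simp add: o_assoc[symmetric])
    show "(\<lambda>\<sigma>. \<sigma> \<circ> \<tau>) ` {\<sigma>. \<sigma> permutes S \<and> \<sigma> ` T = K} \<subseteq> {\<sigma>. \<sigma> permutes S \<and> \<sigma> ` T' = K}"
      using \<tau> by (auto simp: image_comp[symmetric] intro: permutes_compose)
    show "(\<lambda>\<sigma>. \<sigma> \<circ> inv \<tau>) ` {\<sigma>. \<sigma> permutes S \<and> \<sigma> ` T' = K} \<subseteq> {\<sigma>. \<sigma> permutes S \<and> \<sigma> ` T = K}"
      using \<tau>(1) inv_\<tau> by (auto simp: image_comp[symmetric] intro: permutes_compose permutes_inv)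
  qed
  then show ?thesis by (rule bij_betw_same_card)
qed

lemma card_permutes_image_eq_mult_binomial:
  assumes "finite S" "T \<subseteq> S" "K \<subseteq> S" "card T = card K"
  shows "card {\<sigma>. \<sigma> permutes S \<and> \<sigma> ` T = K} * (card S choose card K) = fact (card S)"
proof -
  let ?P = "{\<sigma>. \<sigma> permutes S}"
  let ?B = "{B. B \<subseteq> S \<and> card B = card K}"
  have "finite ?P" using assms(1) by (rule finite_permutations)
  have "finite ?B" using assms(1) by (simp add: finite_subset[of _ "Pow S"] subset_eq)
  have "inv \<sigma> ` K \<subseteq> S" "card (inv \<sigma> ` K) = card K" if "\<sigma> permutes S" for \<sigma>
    using permutes_image[OF permutes_inv[OF that]] assms(3)
      card_image[OF permutes_inj_on[OF permutes_inv[OF that]]] by auto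
  then have "(\<lambda>\<sigma>. inv \<sigma> ` K) ` ?P \<subseteq> ?B" by auto
  have fiber: "{\<sigma> \<in> ?P. inv \<sigma> ` K = B} = {\<sigma>. \<sigma> permutes S \<and> \<sigma> ` B = K}" for B
  proof -
    have "inv \<sigma> ` K = B \<longleftrightarrow> \<sigma> ` B = K" if "\<sigma> permutes S" for \<sigma>
    proof
      assume "inv \<sigma> ` K = B"
      then show "\<sigma> ` B = K" by (auto simp: image_image permutes_inverses[OF that])
    next
      assume "\<sigma> ` B = K"
      then show "inv \<sigma> ` K = B" by (auto simp: image_image permutes_inverses[OF that])
    qed
    then show ?thesis by (simp cong: conj_cong)
  qed
  have "fact (card S) = card ?P"
    using assms(1) by (simp add: card_permutations)
  also have "\<dots> = (\<Sum>B\<in>?B. card {\<sigma> \<in> ?P. inv \<sigma> ` K = B})"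
    using sum.group[OF \<open>finite ?P\<close> \<open>finite ?B\<close> \<open>(\<lambda>\<sigma>. inv \<sigma> ` K) ` ?P \<subseteq> ?B\<close>, of "\<lambda>_. 1::nat"]
    by simp
  also have "\<dots> = (\<Sum>B\<in>?B. card {\<sigma>. \<sigma> permutes S \<and> \<sigma> ` T = K})"
    unfolding fiber using assms by (intro sum.cong refl card_permutes_image_eq_cong) auto
  also have "\<dots> = card {\<sigma>. \<sigma> permutes S \<and> \<sigma> ` T = K} * (card S choose card K)"
    using n_subsets[OF assms(1)] by simp
  finally show ?thesis by simp
qed

lemma eval_tensor_ptensor_a_ac:
  assumes "T \<subseteq> {..<n}" "k \<le> n"
  shows "eval_tensor n T (ptensor n (\<lambda>i. if i < k then a_el else ac_el))
       = (if T = {..<k} then 1 else 0)"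
proof -
  have factor: "fst (if i < k then a_el else ac_el) + snd (if i < k then a_el else ac_el) * e1_value T i
      = (if (i < k) = (i \<in> T) then 1 else 0)" for i
    by (auto simp: a_el_def ac_el_def e1_value_def field_simps)
  have "eval_tensor n T (ptensor n (\<lambda>i. if i < k then a_el else ac_el))
      = (\<Prod>i<n. if (i < k) = (i \<in> T) then 1 else 0)"
    by (simp add: eval_tensor_ptensor[OF assms(1)] factor)
  also have "\<dots> = (if T = {..<k} then 1 else 0)"
  proof (cases "T = {..<k}")
    case False
    then obtain i where i: "(i < k) \<noteq> (i \<in> T)" by auto
    with assms have "i < n" by auto
    with i have "(\<Prod>i<n. if (i < k) = (i \<in> T) then 1 else 0 :: complex) = 0"
      by (intro prod_zero) auto
    with False show ?thesis by simp
  qed simp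
  finally show ?thesis .
qed

lemma eval_tensor_idem:
  assumes "T \<subseteq> {..<n}" "k \<le> n"
  shows "eval_tensor n T (idem n k) = (if card T = k then 1 else 0)"
proof -
  let ?p = "ptensor n (\<lambda>i. if i < k then a_el else ac_el)"
  let ?P = "{\<sigma>. \<sigma> permutes {..<n}}"
  let ?count = "card {\<sigma>. \<sigma> permutes {..<n} \<and> \<sigma> ` T = {..<k}}"
  have "(\<Sum>\<sigma>\<in>?P. eval_tensor n T (tperm \<sigma> ?p)) = (\<Sum>\<sigma>\<in>?P. if inv \<sigma> ` T = {..<k} then 1 else 0)"
  proof (intro sum.cong refl)
    fix \<sigma> assume "\<sigma> \<in> ?P"
    then have "\<sigma> permutes {..<n}" by simp
    moreover from this have "inv \<sigma> ` T \<subseteq> {..<n}"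
      using assms(1) permutes_image[OF permutes_inv] by blast
    ultimately show "eval_tensor n T (tperm \<sigma> ?p) = (if inv \<sigma> ` T = {..<k} then 1 else 0)"
      by (simp add: eval_tensor_tperm eval_tensor_ptensor_a_ac assms(2))
  qed
  also have "\<dots> = (\<Sum>\<sigma>\<in>?P. if \<sigma> ` T = {..<k} then 1 else 0)"
    by (rule sum_permutations_inverse[symmetric])
  also have "\<dots> = of_nat ?count"
    by (simp add: sum.If_cases finite_permutations Collect_conj_eq Int_commute)
  finally have "eval_tensor n T (idem n k) = of_nat (n choose k) * of_nat ?count / fact n"
    unfolding idem_def eval_tensor_tscale eval_tensor_symz by simp
  also have "\<dots> = (if card T = k then 1 else 0)"
  proof (cases "card T = k")
    case True
    with assms card_permutes_image_eq_mult_binomial[of "{..<n}" T "{..<k}"]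
    have "?count * (n choose k) = fact n" by simp
    then have "of_nat ?count * of_nat (n choose k) = (fact n :: complex)"
      by (metis of_nat_fact of_nat_mult)
    with True show ?thesis by (simp add: field_simps)
  next
    case False
    have "{\<sigma>. \<sigma> permutes {..<n} \<and> \<sigma> ` T = {..<k}} = {}"
      using False by (auto simp: card_image[OF inj_on_subset[OF permutes_inj]] dest: arg_cong[of _ _ card])
    with False show ?thesis by (simp only: card.empty) simp
  qed
  finally show ?thesis .
qed

lemma idem_in_Sym:
  assumes "k \<le> n"
  shows "idem n k \<in> Sym n"
  unfolding Sym_def
proof (intro CollectI conjI allI impI idem_in_tensors)
  fix \<sigma> assume \<sigma>: "\<sigma> permutes {..<n}"
  show "tperm \<sigma> (idem n k) = idem n k"
  proof (rule tensor_eqI[OF tperm_in_tensors[OF \<sigma> idem_in_tensors] idem_in_tensors])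
    fix T assume T: "T \<subseteq> {..<n}"
    then have "inv \<sigma> ` T \<subseteq> {..<n}"
      using permutes_image[OF permutes_inv[OF \<sigma>]] by blast
    moreover have "card (inv \<sigma> ` T) = card T"
      using card_image[OF permutes_inj_on[OF permutes_inv[OF \<sigma>]]] .
    ultimately show "eval_tensor n T (tperm \<sigma> (idem n k)) = eval_tensor n T (idem n k)"
      using T by (simp add: eval_tensor_tperm[OF \<sigma>] eval_tensor_idem assms)
  qed
qed

lemma eval_tensor_Sym_card_eq:
  assumes "f \<in> Sym n" "T \<subseteq> {..<n}" "T' \<subseteq> {..<n}" "card T = card T'"
  shows "eval_tensor n T f = eval_tensor n T' f"
proof -
  obtain \<tau> where \<tau>: "\<tau> permutes {..<n}" "\<tau> ` T = T'"
    using exists_permutes_image_eq[of "{..<n}" T T'] assms(2-4) by auto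
  have "eval_tensor n T' f = eval_tensor n T' (tperm \<tau> f)"
    using assms(1) \<tau>(1) by (simp add: Sym_def)
  also have "\<dots> = eval_tensor n (inv \<tau> ` T') f"
    using \<tau>(1) by (rule eval_tensor_tperm)
  also have "inv \<tau> ` T' = T"
    using \<tau> by (metis image_inv_f_f permutes_inj)
  finally show ?thesis ..
qed

lemma eval_tensor_idempotent:
  assumes "idempotent n f"
  shows "eval_tensor n T f = 0 \<or> eval_tensor n T f = 1"
proof -
  have "eval_tensor n T f * eval_tensor n T f = eval_tensor n T f"
    using assms unfolding idempotent_def by (metis eval_tensor_tmul)
  then show ?thesis by (metis mult_cancel_right1 mult_zero_right)
qed

lemma eval_tensor_orthogonal:
  assumes "orthogonal n f g"
  shows "eval_tensor n T f * eval_tensor n T g = 0"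
  using assms unfolding orthogonal_def by (metis eval_tensor_tmul eval_tensor_tzero)

lemma idem_idempotent: "k \<le> n \<Longrightarrow> idempotent n (idem n k)"
  unfolding idempotent_def
  by (rule tensor_eqI[OF tmul_in_tensors idem_in_tensors]) (simp add: eval_tensor_tmul eval_tensor_idem)

lemma idem_orthogonal:
  assumes "k \<le> n" "l \<le> n" "k \<noteq> l"
  shows "orthogonal n (idem n k) (idem n l)"
proof -
  have "tmul n (idem n i) (idem n j) = tzero" if "i \<le> n" "j \<le> n" "i \<noteq> j" for i j
    by (rule tensor_eqI[OF tmul_in_tensors tzero_in_tensors])
      (use that in \<open>simp add: eval_tensor_tmul eval_tensor_idem eval_tensor_tzero\<close>)
  with assms show ?thesis
    unfolding orthogonal_def by auto
qed

lemma tsum_idem: "tsum {..n} (idem n) = tone n"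
proof (rule tensor_eqI[OF tsum_in_tensors[OF idem_in_tensors] tone_in_tensors])
  fix T assume T: "T \<subseteq> {..<n}"
  then have "card T \<le> n"
    using card_mono[of "{..<n}" T] by simp
  with T show "eval_tensor n T (tsum {..n} (idem n)) = eval_tensor n T (tone n)"
    by (simp add: eval_tensor_tsum eval_tensor_idem eval_tensor_tone)
qed

lemma idempotent_summand_of_idem:
  assumes "h \<in> tensors n" "h \<noteq> tzero" "idempotent n h"
    and "orthogonal n h h'" "tadd h h' = idem n k" "k \<le> n"
  obtains T where "T \<subseteq> {..<n}" "card T = k" "eval_tensor n T h = 1" "eval_tensor n T h' = 0"
proof -
  obtain T where T: "T \<subseteq> {..<n}" "eval_tensor n T h \<noteq> 0"
    using tensor_eqI[OF assms(1) tzero_in_tensors] assms(2) eval_tensor_tzero by metis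
  then have "eval_tensor n T h = 1"
    using eval_tensor_idempotent[OF assms(3)] by blast
  moreover from this have "eval_tensor n T h' = 0"
    using eval_tensor_orthogonal[OF assms(4), of T] by simp
  moreover have "eval_tensor n T h + eval_tensor n T h' = (if card T = k then 1 else 0)"
    using assms(5,6) T(1) by (metis eval_tensor_tadd eval_tensor_idem)
  ultimately show ?thesis
    using that T(1) by (simp split: if_splits)
qed

lemma idem_primitive:
  assumes "k \<le> n"
  shows "primitive_in_Sym n (idem n k)"
  unfolding primitive_in_Sym_def
proof (intro conjI idem_in_Sym assms idem_idempotent notI)
  have "eval_tensor n {..<k} (idem n k) = 1"
    using assms by (simp add: eval_tensor_idem)
  then show "idem n k = tzero \<Longrightarrow> False"
    by (simp add: eval_tensor_tzero)
next
  assume "\<exists>f\<in>Sym n. \<exists>g\<in>Sym n. f \<noteq> tzero \<and> g \<noteq> tzero \<and> idempotent n f \<and>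
      idempotent n g \<and> orthogonal n f g \<and> tadd f g = idem n k"
  then obtain f g where f: "f \<in> Sym n" "f \<noteq> tzero" "idempotent n f"
    and g: "g \<in> Sym n" "g \<noteq> tzero" "idempotent n g"
    and fg: "orthogonal n f g" "tadd f g = idem n k"
    by blast
  have gf: "orthogonal n g f" "tadd g f = idem n k"
    using fg by (auto simp: orthogonal_def tadd_def add.commute)
  obtain T where T: "T \<subseteq> {..<n}" "card T = k" "eval_tensor n T f = 1"
    using idempotent_summand_of_idem[of f n g k] f fg assms by (auto simp: Sym_def)
  obtain T' where T': "T' \<subseteq> {..<n}" "card T' = k" "eval_tensor n T' f = 0"
    using idempotent_summand_of_idem[of g n f k] g gf assms by (auto simp: Sym_def)
  show False
    using eval_tensor_Sym_card_eq[OF f(1) T(1) T'(1)] T T' by simp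
qed

theorem lemma3p2:
  fixes n :: nat
  assumes "0 < n"
  shows "(\<forall>k\<le>n. primitive_in_Sym n (idem n k))
       \<and> (\<forall>k\<le>n. \<forall>l\<le>n. k \<noteq> l \<longrightarrow> orthogonal n (idem n k) (idem n l))
       \<and> tsum {..n} (idem n) = tone n"
  using idem_primitive idem_orthogonal tsum_idem by blast

end
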